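(* Let $s,t\geq0$ be integers. The isomorphism type generating series of the virtual species $\mathcal Q^{s,t}(X,X,X)$ is \[ \widetilde{\mathcal Q^{s,t}}(x)=\frac{(1-x^{s+2})(1-x^{t+2})}{1-x}-1, \] and the isomorphism type generating series of the virtual species $X^2-[t>0]X^2-[s>0]\mathcal E_2(X)$ is $x^2-[t>0]x^2-[s>0]x^2$. In particular both are symmetric in $s$ and $t$.
   Context: Species and virtual species and their operations are as in the theory of combinatorial species. For a species $F$ the cycle index series is $Z_F=\sum_{n\ge0}\frac1{n!}\sum_{\sigma\in\mathfrak S_n}\mathrm{fix}\,F[\sigma]\,p_1^{\sigma_1}p_2^{\sigma_2}\cdots$ (with $\sigma_k$ the number of $k$-cycles of $\sigma$), extended additively to virtual species; the isomorphism type generating series $\widetilde F(x)$ is obtained by substituting $p_k=x^k$ (for an actual species it counts isomorphism types by size). $X,Y,Z$ are singleton species of three sorts; $1=\mathcal E_0$; $\mathcal E$ is the species of sets, $\mathcal E_n$, $\mathcal E_{m\leq\bullet<n}$, $\mathcal E_{<n}$ its restrictions to sets of size $n$, sizes $m,\dots,n-1$, sizes $<n$; $\mathcal E(-X)$ is the multiplicative inverse of $\mathcal E(X)$; $[P]$ is the Iverson bracket. $\mathcal Q^{s,t}(X,Y,Z)=\big(1+X+\mathcal E_{2\leq\bullet<2+s}(Z)\big)\,\mathcal E\big(X(\mathcal E_{<1+t}(Y)\mathcal E(-X)-1)\big)-1$. *)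

theory Defs
  imports "HOL-Library.Multiset" "HOL-Computational_Algebra.Formal_Power_Series"
begin

text \<open>A monomial p_1^{a_1} p_2^{a_2} ... is encoded by the multiset of cycle lengths
  (a_k copies of k); a cycle index series is its coefficient function.\<close>

type_synonym cis = "nat multiset \<Rightarrow> rat"

text \<open>z_lambda = prod_i i^{m_i} m_i!  (number of permutations commuting with one of cycle type lambda)\<close>
definition zee :: "nat multiset \<Rightarrow> rat" where
  "zee l = (\<Prod>i\<in>set_mset l. of_nat i ^ count l i * fact (count l i))"

definition cis_zero :: cis where "cis_zero = (\<lambda>l. 0)"
definition cis_one :: cis where "cis_one = (\<lambda>l. if l = {#} then 1 else 0)"
definition cis_X :: cis where "cis_X = (\<lambda>l. if l = {#1#} then 1 else 0)"

definition cis_add :: "cis \<Rightarrow> cis \<Rightarrow> cis" where "cis_add F G = (\<lambda>l. F l + G l)"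
definition cis_diff :: "cis \<Rightarrow> cis \<Rightarrow> cis" where "cis_diff F G = (\<lambda>l. F l - G l)"
definition cis_smul :: "rat \<Rightarrow> cis \<Rightarrow> cis" where "cis_smul c F = (\<lambda>l. c * F l)"

text \<open>Product of species: product of cycle index series (p^mu p^nu = p^(mu+nu)).\<close>
definition cis_mul :: "cis \<Rightarrow> cis \<Rightarrow> cis" where
  "cis_mul F G = (\<lambda>l. \<Sum>m\<in>{m. m \<subseteq># l}. F m * G (l - m))"

definition cis_prod_list :: "cis list \<Rightarrow> cis" where
  "cis_prod_list Fs = foldr cis_mul Fs cis_one"

definition cis_E_range :: "nat \<Rightarrow> nat \<Rightarrow> cis" where
  "cis_E_range m n = (\<lambda>l. if 0 \<notin># l \<and> m \<le> sum_mset l \<and> sum_mset l < n then 1 / zee l else 0)"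

definition cis_E :: cis where
  "cis_E = (\<lambda>l. if 0 \<notin># l then 1 / zee l else 0)"

definition cis_E_n :: "nat \<Rightarrow> cis" where "cis_E_n n = cis_E_range n (Suc n)"
definition cis_E_less :: "nat \<Rightarrow> cis" where "cis_E_less n = cis_E_range 0 n"

text \<open>E(-X): the multiplicative inverse of E(X).\<close>
definition cis_E_negX :: cis where
  "cis_E_negX = (THE G. cis_mul cis_E G = cis_one)"

text \<open>G^(k)(p_1,p_2,...) = G(p_k,p_{2k},...).\<close>
definition cis_stretch :: "nat \<Rightarrow> cis \<Rightarrow> cis" where
  "cis_stretch k G = (\<lambda>l. if (\<forall>j\<in>#l. k dvd j) then G (image_mset (\<lambda>j. j div k) l) else 0)"

text \<open>Plethystic substitution Z_{F o G} = Z_F(Z_G^(1), Z_G^(2), ...) (for G with zero constant term);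
  only monomials mu with |mu| <= |lambda| can contribute to the coefficient of p^lambda.\<close>
definition cis_comp :: "cis \<Rightarrow> cis \<Rightarrow> cis" where
  "cis_comp F G = (\<lambda>l. \<Sum>m\<in>{m. set_mset m \<subseteq> {1..sum_mset l} \<and> size m \<le> sum_mset l}.
      F m * cis_prod_list (map (\<lambda>k. cis_stretch k G) (sorted_list_of_multiset m)) l)"

text \<open>Isomorphism type generating series: substitute p_k = x^k.\<close>
definition cis_tilde :: "cis \<Rightarrow> rat fps" where
  "cis_tilde F = Abs_fps (\<lambda>n. \<Sum>l\<in>{l. set_mset l \<subseteq> {1..n} \<and> size l \<le> n \<and> sum_mset l = n}. F l)"

definition Q_XXX :: "nat \<Rightarrow> nat \<Rightarrow> cis" where
  "Q_XXX s t = cis_diff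
     (cis_mul (cis_add (cis_add cis_one cis_X) (cis_comp (cis_E_range 2 (2 + s)) cis_X))
              (cis_comp cis_E (cis_mul cis_X (cis_diff (cis_mul (cis_comp (cis_E_less (1 + t)) cis_X) cis_E_negX) cis_one))))
     cis_one"

end

theory Submission
  imports Defs
begin

text \<open>Substituting \<open>p\<^sub>k = x\<^sup>k\<close> turns products of cycle index series into products
  of power series and the stretch \<open>G(p\<^sub>k, p\<^sub>2\<^sub>k, ...)\<close> into \<open>G~(x\<^sup>k)\<close>; hence the series
  of \<open>F o G\<close> is \<open>Z\<^sub>F(G~(x), G~(x\<^sup>2), ...)\<close>. For the species of sets and \<open>G~ = \<sigma> x\<^sup>c\<close>
  this is the sum over partitions \<open>\<lambda>\<close> of \<open>\<sigma>\<^bsup>\<ell>(\<lambda>)\<^esup> x\<^bsup>c|\<lambda>|\<^esup> / z\<^sub>\<lambda>\<close>. Removing one part of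
  \<open>\<lambda>\<close> shows that \<open>c\<^sub>n = \<Sum>\<^bsub>|\<lambda>| = n\<^esub> \<sigma>\<^bsup>\<ell>(\<lambda>)\<^esup> / z\<^sub>\<lambda>\<close> satisfies
  \<open>n c\<^sub>n = \<sigma> (c\<^sub>0 + ... + c\<^bsub>n-1\<^esub>)\<close>, which gives \<open>c\<^sub>n = 1\<close> for \<open>\<sigma> = 1\<close>, i.e.
  \<open>E~ = 1/(1 - x)\<close>, and \<open>1, -1, 0, 0, ...\<close> for \<open>\<sigma> = -1\<close>, i.e. \<open>E(-X)~ = 1 - x\<close>.
  So the argument of \<open>E\<close> in \<open>Q\<^bsup>s,t\<^esup>(X,X,X)\<close> has series \<open>x((1 - x\<^bsup>t+1\<^esup>) - 1) = -x\<^bsup>t+2\<^esup>\<close>,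
  \<open>E\<close> of it has series \<open>1 - x\<^bsup>t+2\<^esup>\<close>, and the first factor has series
  \<open>1 + x + ... + x\<^bsup>s+1\<^esup>\<close>.\<close>

section \<open>Partitions\<close>

definition partitions :: "nat \<Rightarrow> nat multiset set" where
  "partitions n = {l. 0 \<notin># l \<and> sum_mset l = n}"

text \<open>The finite range of multisets over which \<^const>\<open>cis_tilde\<close> and \<^const>\<open>cis_comp\<close> sum.\<close>

definition bounded_msets :: "nat \<Rightarrow> nat multiset set" where
  "bounded_msets n = {m. set_mset m \<subseteq> {1..n} \<and> size m \<le> n}"

lemma size_le_sum_mset: "0 \<notin># l \<Longrightarrow> size l \<le> sum_mset (l::nat multiset)"
  by (induction l) (auto simp: Suc_le_eq)

lemma member_le_sum_mset: "k \<in># l \<Longrightarrow> k \<le> sum_mset (l::nat multiset)"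
  by (metis insert_DiffM le_add1 sum_mset.add_mset)

lemma finite_msets_bounded_size:
  assumes "finite A" shows "finite {m::'a multiset. set_mset m \<subseteq> A \<and> size m \<le> n}"
proof -
  have "{m::'a multiset. set_mset m \<subseteq> A \<and> size m \<le> n} = (\<Union>j\<le>n. multisets_of_size A j)"
    by (auto simp: multisets_of_size_def)
  then show ?thesis using assms by auto
qed

lemma finite_submultisets: "finite {m. m \<subseteq># (l::'a multiset)}"
proof -
  have "{m. m \<subseteq># l} \<subseteq> {m. set_mset m \<subseteq> set_mset l \<and> size m \<le> size l}"
    by (auto simp: size_mset_mono dest: mset_subset_eqD)
  then show ?thesis using finite_msets_bounded_size finite_subset by blast
qed

lemma finite_bounded_msets: "finite (bounded_msets n)"
  unfolding bounded_msets_def by (rule finite_msets_bounded_size) simp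

lemma bounded_msets_mono: "n \<le> n' \<Longrightarrow> bounded_msets n \<subseteq> bounded_msets n'"
  by (auto simp: bounded_msets_def)

lemma partitions_eq_bounded_msets: "partitions n = {l \<in> bounded_msets n. sum_mset l = n}"
proof -
  have "l \<in> bounded_msets n" if "0 \<notin># l" "sum_mset l = n" for l
    using that size_le_sum_mset[of l] member_le_sum_mset[of _ l]
    by (auto simp: bounded_msets_def Suc_le_eq intro!: gr0I)
  then show ?thesis by (auto simp: partitions_def bounded_msets_def)
qed

lemma partitions_0: "partitions 0 = {{#}}"
  by (auto simp: partitions_def) (metis multiset_nonemptyE)

lemma partitions_subset_bounded_msets: "partitions n \<subseteq> bounded_msets n"
  unfolding partitions_eq_bounded_msets by blast

lemma finite_partitions: "finite (partitions n)"
  unfolding partitions_eq_bounded_msets using finite_bounded_msets by simp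

section \<open>The isomorphism type series as a ring homomorphism\<close>

lemma cis_tilde_nth: "fps_nth (cis_tilde F) n = (\<Sum>l\<in>partitions n. F l)"
  unfolding cis_tilde_def partitions_eq_bounded_msets bounded_msets_def by (simp add: conj_assoc)

lemma cis_tilde_add: "cis_tilde (cis_add F G) = cis_tilde F + cis_tilde G"
  by (rule fps_ext) (simp add: cis_tilde_nth cis_add_def sum.distrib)

lemma cis_tilde_diff: "cis_tilde (cis_diff F G) = cis_tilde F - cis_tilde G"
  by (rule fps_ext) (simp add: cis_tilde_nth cis_diff_def sum_subtractf)

lemma cis_tilde_smul: "cis_tilde (cis_smul c F) = fps_const c * cis_tilde F"
  by (rule fps_ext) (simp add: cis_tilde_nth cis_smul_def sum_distrib_left)

lemma partitions_split_bij:
  "bij_betw (\<lambda>(i, m, r). (m + r, m))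
     (SIGMA i:{..n}. partitions i \<times> partitions (n - i)) (SIGMA l:partitions n. {m. m \<subseteq># l})"
proof (rule bij_betw_byWitness[where f' = "\<lambda>(l, m). (sum_mset m, m, l - m)"])
  have "sum_mset l = sum_mset m + sum_mset (l - m)" if "m \<subseteq># l" for l m :: "nat multiset"
    using that by (metis subset_mset.add_diff_inverse sum_mset.union)
  then show "(\<lambda>(l, m). (sum_mset m, m, l - m)) ` (SIGMA l:partitions n. {m. m \<subseteq># l})
      \<subseteq> (SIGMA i:{..n}. partitions i \<times> partitions (n - i))"
    by (fastforce simp: partitions_def dest: mset_subset_eqD in_diffD)
qed (auto simp: partitions_def)

lemma sum_partitions_split:
  "(\<Sum>l\<in>partitions n. \<Sum>m | m \<subseteq># l. f m (l - m))
     = (\<Sum>i\<le>n. \<Sum>m\<in>partitions i. \<Sum>r\<in>partitions (n - i). f m r)"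
proof -
  have "(\<Sum>i\<le>n. \<Sum>m\<in>partitions i. \<Sum>r\<in>partitions (n - i). f m r)
      = (\<Sum>(i, m, r)\<in>(SIGMA i:{..n}. partitions i \<times> partitions (n - i)). f m r)"
    by (simp add: sum.Sigma finite_partitions sum.cartesian_product)
  also have "\<dots> = (\<Sum>x\<in>(SIGMA i:{..n}. partitions i \<times> partitions (n - i)).
                        (\<lambda>(l, m). f m (l - m)) ((\<lambda>(i, m, r). (m + r, m)) x))"
    by (intro sum.cong) auto
  also have "\<dots> = (\<Sum>(l, m)\<in>(SIGMA l:partitions n. {m. m \<subseteq># l}). f m (l - m))"
    by (rule sum.reindex_bij_betw[OF partitions_split_bij])
  also have "\<dots> = (\<Sum>l\<in>partitions n. \<Sum>m | m \<subseteq># l. f m (l - m))"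
    by (simp add: sum.Sigma finite_partitions finite_submultisets)
  finally show ?thesis ..
qed

lemma cis_tilde_mul: "cis_tilde (cis_mul F G) = cis_tilde F * cis_tilde G"
proof (rule fps_ext)
  fix n
  have "fps_nth (cis_tilde (cis_mul F G)) n = (\<Sum>l\<in>partitions n. \<Sum>m | m \<subseteq># l. F m * G (l - m))"
    by (simp add: cis_tilde_nth cis_mul_def)
  also have "\<dots> = (\<Sum>i\<le>n. \<Sum>m\<in>partitions i. \<Sum>r\<in>partitions (n - i). F m * G r)"
    by (rule sum_partitions_split)
  also have "\<dots> = fps_nth (cis_tilde F * cis_tilde G) n"
    by (simp add: cis_tilde_nth fps_mult_nth atLeast0AtMost sum_product)
  finally show "fps_nth (cis_tilde (cis_mul F G)) n = fps_nth (cis_tilde F * cis_tilde G) n" .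
qed

definition cis_monomial :: "nat multiset \<Rightarrow> cis" where
  "cis_monomial M = (\<lambda>l. if l = M then 1 else 0)"

lemma cis_one_eq_monomial: "cis_one = cis_monomial {#}"
  by (simp add: cis_one_def cis_monomial_def)

lemma cis_X_eq_monomial: "cis_X = cis_monomial {#1#}"
  by (simp add: cis_X_def cis_monomial_def)

lemma cis_tilde_monomial:
  assumes "0 \<notin># M" shows "cis_tilde (cis_monomial M) = fps_X ^ sum_mset M"
proof (rule fps_ext)
  fix n
  have "(\<Sum>l\<in>partitions n. cis_monomial M l) = of_bool (M \<in> partitions n)"
    by (simp add: cis_monomial_def finite_partitions sum.delta')
  then show "fps_nth (cis_tilde (cis_monomial M)) n = fps_nth (fps_X ^ sum_mset M) n"
    using assms by (auto simp: cis_tilde_nth partitions_def)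
qed

lemma cis_tilde_one: "cis_tilde cis_one = 1"
  by (simp add: cis_one_eq_monomial cis_tilde_monomial)

lemma cis_tilde_X: "cis_tilde cis_X = fps_X"
  by (simp add: cis_X_eq_monomial cis_tilde_monomial)

lemma cis_tilde_prod_list: "cis_tilde (cis_prod_list Fs) = prod_list (map cis_tilde Fs)"
  by (induction Fs) (simp_all add: cis_prod_list_def cis_tilde_one cis_tilde_mul)

lemma cis_mul_monomial: "cis_mul (cis_monomial A) (cis_monomial B) = cis_monomial (A + B)"
proof
  fix l
  have "cis_mul (cis_monomial A) (cis_monomial B) l
      = (\<Sum>m | m \<subseteq># l. if m = A then of_bool (l - A = B) else 0)"
    unfolding cis_mul_def cis_monomial_def by (intro sum.cong) auto
  also have "\<dots> = of_bool (A \<subseteq># l \<and> l - A = B)"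
    by (simp add: finite_submultisets sum.delta')
  also have "\<dots> = cis_monomial (A + B) l"
    by (auto simp: cis_monomial_def)
  finally show "cis_mul (cis_monomial A) (cis_monomial B) l = cis_monomial (A + B) l" .
qed

lemma cis_stretch_monomial:
  assumes "k > 0"
  shows "cis_stretch k (cis_monomial M) = cis_monomial (image_mset ((*) k) M)"
proof
  fix l
  have "(\<forall>j\<in>#l. k dvd j) \<and> image_mset (\<lambda>j. j div k) l = M \<longleftrightarrow> l = image_mset ((*) k) M"
  proof
    assume *: "(\<forall>j\<in>#l. k dvd j) \<and> image_mset (\<lambda>j. j div k) l = M"
    then have "image_mset ((*) k) M = image_mset (\<lambda>j. k * (j div k)) l"
      by (auto simp: multiset.map_comp o_def)
    also have "\<dots> = l"
      using * by (simp cong: image_mset_cong)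
    finally show "l = image_mset ((*) k) M" ..
  qed (use assms in \<open>simp add: multiset.map_comp o_def\<close>)
  then show "cis_stretch k (cis_monomial M) l = cis_monomial (image_mset ((*) k) M) l"
    by (auto simp: cis_stretch_def cis_monomial_def)
qed

lemma cis_prod_list_stretch_X:
  "\<forall>k\<in>set ks. k > 0 \<Longrightarrow> cis_prod_list (map (\<lambda>k. cis_stretch k cis_X) ks) = cis_monomial (mset ks)"
  by (induction ks)
    (simp_all add: cis_prod_list_def cis_one_eq_monomial cis_X_eq_monomial cis_stretch_monomial
      cis_mul_monomial)

lemma cis_comp_X:
  assumes "0 \<notin># l" shows "cis_comp F cis_X l = F l"
proof -
  let ?B = "bounded_msets (sum_mset l)"
  have "cis_comp F cis_X l = (\<Sum>m\<in>?B. if m = l then F m else 0)"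
    unfolding cis_comp_def bounded_msets_def[symmetric]
  proof (intro sum.cong refl)
    fix m assume "m \<in> ?B"
    then have "\<forall>k\<in>set (sorted_list_of_multiset m). k > 0"
      by (auto simp: bounded_msets_def)
    then show "F m * cis_prod_list (map (\<lambda>k. cis_stretch k cis_X) (sorted_list_of_multiset m)) l
        = (if m = l then F m else 0)"
      by (simp add: cis_prod_list_stretch_X cis_monomial_def)
  qed
  also have "\<dots> = F l"
    using assms partitions_subset_bounded_msets[of "sum_mset l"]
    by (auto simp: partitions_def finite_bounded_msets)
  finally show ?thesis .
qed

lemma cis_tilde_comp_X: "cis_tilde (cis_comp F cis_X) = cis_tilde F"
  by (rule fps_ext) (simp add: cis_tilde_nth partitions_def cis_comp_X)

section \<open>The cycle index series of sets\<close>

lemma zee_eq_prod_superset: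
  assumes "finite A" "set_mset l \<subseteq> A"
  shows "zee l = (\<Prod>i\<in>A. of_nat i ^ count l i * fact (count l i))"
  unfolding zee_def using assms by (intro prod.mono_neutral_left) (auto simp: not_in_iff)

lemma zee_add_mset: "zee (add_mset k l) = zee l * of_nat k * of_nat (count l k + 1)"
proof -
  define A where "A = insert k (set_mset l)"
  define f where "f i c = (of_nat i :: rat) ^ c * fact c" for i c
  have A: "finite A" "k \<in> A" by (simp_all add: A_def)
  have "zee (add_mset k l) = (\<Prod>i\<in>A. f i (count (add_mset k l) i))"
    using zee_eq_prod_superset[of A "add_mset k l"] by (simp add: A_def f_def)
  also have "\<dots> = f k (count l k + 1) * (\<Prod>i\<in>A - {k}. f i (count (add_mset k l) i))"
    using A by (simp add: prod.remove)
  also have "(\<Prod>i\<in>A - {k}. f i (count (add_mset k l) i)) = (\<Prod>i\<in>A - {k}. f i (count l i))"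
    by (intro prod.cong) auto
  finally have "zee (add_mset k l) = f k (count l k + 1) * (\<Prod>i\<in>A - {k}. f i (count l i))" .
  moreover have "zee l = f k (count l k) * (\<Prod>i\<in>A - {k}. f i (count l i))"
  proof -
    have "zee l = (\<Prod>i\<in>A. f i (count l i))"
      unfolding f_def by (rule zee_eq_prod_superset) (auto simp: A_def)
    then show ?thesis using A by (simp add: prod.remove)
  qed
  moreover have "f k (count l k + 1) = f k (count l k) * of_nat k * of_nat (count l k + 1)"
    by (simp add: f_def algebra_simps)
  ultimately show ?thesis by (simp add: algebra_simps)
qed

lemma zee_remove: "k \<in># l \<Longrightarrow> zee l = zee (l - {#k#}) * of_nat k * of_nat (count l k)"
  using zee_add_mset[of k "l - {#k#}"] by (simp add: insert_DiffM)

lemma zee_nonzero: "0 \<notin># l \<Longrightarrow> zee l \<noteq> 0"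
  unfolding zee_def by (auto simp: prod_zero_iff)

text \<open>The coefficient of \<open>x\<^sup>n\<close> in \<open>Z\<^sub>E(\<sigma>x, \<sigma>x\<^sup>2, ...) = exp(\<sigma>(x + x\<^sup>2/2 + ...)) = (1 - x)\<^bsup>-\<sigma>\<^esup>\<close>.\<close>

definition zee_sum :: "rat \<Rightarrow> nat \<Rightarrow> rat" where
  "zee_sum \<sigma> n = (\<Sum>l\<in>partitions n. \<sigma> ^ size l / zee l)"

lemma sum_mset_eq_sum_count:
  "finite A \<Longrightarrow> set_mset l \<subseteq> A \<Longrightarrow> sum_mset l = (\<Sum>k\<in>A. count l k * (k::nat))"
proof (induction l)
  case (add x l)
  then have "(\<Sum>k\<in>A. count (add_mset x l) k * k) = (\<Sum>k\<in>A. count l k * k + (if k = x then x else 0))"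
    by (intro sum.cong) auto
  with add show ?case by (simp add: sum.distrib)
qed simp

lemma zee_sum_term_remove_part:
  assumes "l \<in> partitions n"
  shows "of_nat n * (\<sigma> ^ size l / zee l)
       = (\<Sum>k\<in>set_mset l. \<sigma> * (\<sigma> ^ size (l - {#k#}) / zee (l - {#k#})))"
proof -
  have l0: "0 \<notin># l" and ln: "sum_mset l = n" using assms by (auto simp: partitions_def)
  have "\<sigma> * (\<sigma> ^ size (l - {#k#}) / zee (l - {#k#})) = \<sigma> ^ size l * (of_nat (count l k * k) / zee l)"
    if k: "k \<in># l" for k
  proof -
    have "zee (l - {#k#}) \<noteq> 0" "k \<noteq> 0"
      using zee_nonzero[OF l0] zee_remove[OF k] k l0 by auto
    moreover have "size l = Suc (size (l - {#k#}))"
      using k by (metis insert_DiffM size_add_mset)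
    ultimately show ?thesis
      using zee_remove[OF k] k by (simp add: field_simps)
  qed
  then have "(\<Sum>k\<in>set_mset l. \<sigma> * (\<sigma> ^ size (l - {#k#}) / zee (l - {#k#})))
      = \<sigma> ^ size l * (of_nat (\<Sum>k\<in>set_mset l. count l k * k) / zee l)"
    by (simp add: sum_distrib_left sum_divide_distrib)
  also have "(\<Sum>k\<in>set_mset l. count l k * k) = n"
    using sum_mset_eq_sum_count[of "set_mset l" l] ln by simp
  finally show ?thesis by simp
qed

lemma partitions_remove_part_bij:
  "bij_betw (\<lambda>(l, k). (n - k, l - {#k#}))
     (SIGMA l:partitions n. set_mset l) (SIGMA j:{..<n}. partitions j)"
proof (rule bij_betw_byWitness[where f' = "\<lambda>(j, l). (add_mset (n - j) l, n - j)"])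
  have "n - k < n \<and> l - {#k#} \<in> partitions (n - k)" if "l \<in> partitions n" "k \<in># l" for l k
  proof -
    have "0 \<notin># l" "sum_mset l = n" using that(1) by (auto simp: partitions_def)
    moreover have "sum_mset l = k + sum_mset (l - {#k#})" using that(2) by (simp add: sum_mset.remove)
    ultimately show ?thesis using that(2) by (auto simp: partitions_def dest: in_diffD intro!: gr0I)
  qed
  then show "(\<lambda>(l, k). (n - k, l - {#k#})) ` (SIGMA l:partitions n. set_mset l)
      \<subseteq> (SIGMA j:{..<n}. partitions j)" by auto
  show "\<forall>a\<in>SIGMA l:partitions n. set_mset l.
      (\<lambda>(j, l). (add_mset (n - j) l, n - j)) ((\<lambda>(l, k). (n - k, l - {#k#})) a) = a"
  proof
    fix a assume "a \<in> (SIGMA l:partitions n. set_mset l)"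
    then obtain l k where "a = (l, k)" "k \<in># l" "k \<le> n"
      using member_le_sum_mset by (auto simp: partitions_def)
    then show "(\<lambda>(j, l). (add_mset (n - j) l, n - j)) ((\<lambda>(l, k). (n - k, l - {#k#})) a) = a"
      by simp
  qed
qed (auto simp: partitions_def)

lemma zee_sum_recurrence: "of_nat n * zee_sum \<sigma> n = \<sigma> * (\<Sum>j<n. zee_sum \<sigma> j)"
proof -
  let ?t = "\<lambda>l. \<sigma> * (\<sigma> ^ size l / zee l)"
  have "of_nat n * zee_sum \<sigma> n = (\<Sum>l\<in>partitions n. \<Sum>k\<in>set_mset l. ?t (l - {#k#}))"
    unfolding zee_sum_def sum_distrib_left by (intro sum.cong refl zee_sum_term_remove_part)
  also have "\<dots> = (\<Sum>(l, k)\<in>(SIGMA l:partitions n. set_mset l). ?t (l - {#k#}))"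
    by (simp add: sum.Sigma finite_partitions)
  also have "\<dots> = (\<Sum>x\<in>(SIGMA l:partitions n. set_mset l).
                        (\<lambda>(j, l). ?t l) ((\<lambda>(l, k). (n - k, l - {#k#})) x))"
    by (intro sum.cong) auto
  also have "\<dots> = (\<Sum>(j, l)\<in>(SIGMA j:{..<n}. partitions j). ?t l)"
    by (rule sum.reindex_bij_betw[OF partitions_remove_part_bij])
  also have "\<dots> = \<sigma> * (\<Sum>j<n. zee_sum \<sigma> j)"
    by (simp add: sum.Sigma[symmetric] finite_partitions zee_sum_def sum_distrib_left)
  finally show ?thesis .
qed

lemma zee_sum_0: "zee_sum \<sigma> 0 = 1"
  by (simp add: zee_sum_def partitions_0 zee_def)

lemma zee_sum_one: "zee_sum 1 n = 1"
proof (induction n rule: less_induct)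
  case (less n)
  show ?case
  proof (cases n)
    case (Suc m)
    have "of_nat n * zee_sum 1 n = of_nat n"
      using zee_sum_recurrence[of n 1] less by simp
    then show ?thesis using Suc by simp
  qed (simp add: zee_sum_0)
qed

lemma zee_sum_minus_one: "zee_sum (-1) n = (if n = 0 then 1 else if n = 1 then -1 else 0)"
proof (induction n rule: less_induct)
  case (less n)
  have sum_initial: "(\<Sum>j<m. if j = 0 then 1 else if j = 1 then -1 else 0 :: rat) = of_bool (m = 1)" for m :: nat
    by (induction m) auto
  show ?case
  proof (cases n)
    case (Suc m)
    have "of_nat n * zee_sum (-1) n = - of_bool (n = 1)"
      using zee_sum_recurrence[of n "-1"] less sum_initial[of n] by simp
    then show ?thesis using Suc by (auto split: if_splits)
  qed (simp add: zee_sum_0)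
qed

lemma cis_tilde_E_range: "cis_tilde (cis_E_range a b) = Abs_fps (\<lambda>n. of_bool (a \<le> n \<and> n < b))"
proof (rule fps_ext)
  fix n
  have "fps_nth (cis_tilde (cis_E_range a b)) n = of_bool (a \<le> n \<and> n < b) * zee_sum 1 n"
    unfolding cis_tilde_nth zee_sum_def
    by (auto simp: cis_E_range_def partitions_def intro!: sum.cong sum.neutral)
  then show "fps_nth (cis_tilde (cis_E_range a b)) n = fps_nth (Abs_fps (\<lambda>n. of_bool (a \<le> n \<and> n < b))) n"
    by (simp add: zee_sum_one)
qed

lemma cis_tilde_E: "cis_tilde cis_E = inverse (1 - fps_X)"
proof (rule fps_ext)
  fix n
  have "fps_nth (cis_tilde cis_E) n = zee_sum 1 n"
    unfolding cis_tilde_nth zee_sum_def by (intro sum.cong) (auto simp: cis_E_def partitions_def)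
  then show "fps_nth (cis_tilde cis_E) n = fps_nth (inverse (1 - fps_X)) n"
    by (simp add: zee_sum_one fps_inverse_one_minus_fps_X)
qed

function cis_inverse :: "cis \<Rightarrow> cis" where
  "cis_inverse F l =
     (if l = {#} then 1 else - (\<Sum>m | m \<subseteq># l \<and> m \<noteq> {#}. F m * cis_inverse F (l - m)))"
  by auto
termination
proof (relation "measure (\<lambda>(F, l). size l)")
  fix F l m assume "l \<noteq> {#}" "m \<in> {m. m \<subseteq># l \<and> m \<noteq> {#}}"
  then show "((F, l - m), F, l) \<in> measure (\<lambda>(F, l). size l)"
    by (simp add: size_Diff_submset)
      (metis diff_less nonempty_has_size size_mset_mono neq0_conv le_zero_eq)
qed simp

declare cis_inverse.simps [simp del]

lemma cis_mul_eq_unit_part: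
  assumes "F {#} = 1"
  shows "cis_mul F G l = G l + (\<Sum>m | m \<subseteq># l \<and> m \<noteq> {#}. F m * G (l - m))"
proof -
  have "{m. m \<subseteq># l} = insert {#} {m. m \<subseteq># l \<and> m \<noteq> {#}}" by auto
  moreover have "finite {m. m \<subseteq># l \<and> m \<noteq> {#}}"
    using finite_submultisets[of l] by (rule finite_subset[rotated]) auto
  ultimately show ?thesis using assms by (simp add: cis_mul_def)
qed

lemma cis_mul_inverse: "F {#} = 1 \<Longrightarrow> cis_mul F (cis_inverse F) = cis_one"
  by (rule ext) (simp add: cis_mul_eq_unit_part cis_one_def cis_inverse.simps)

lemma cis_inverse_unique:
  assumes F: "F {#} = 1" and G: "cis_mul F G = cis_one"
  shows "G = cis_inverse F"
proof
  fix l show "G l = cis_inverse F l"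
  proof (induction l rule: full_multiset_induct)
    case (less l)
    have "l - m \<subset># l" if "m \<subseteq># l" "m \<noteq> {#}" for m
      using that by (metis add_cancel_left_right diff_subset_eq_self subset_mset.diff_add
          subset_mset.strict_iff_order)
    then have "(\<Sum>m | m \<subseteq># l \<and> m \<noteq> {#}. F m * G (l - m))
        = (\<Sum>m | m \<subseteq># l \<and> m \<noteq> {#}. F m * cis_inverse F (l - m))"
      using less by (intro sum.cong) auto
    moreover have "G l = cis_one l - (\<Sum>m | m \<subseteq># l \<and> m \<noteq> {#}. F m * G (l - m))"
      using cis_mul_eq_unit_part[of F G l, OF F] G by simp
    ultimately show ?case
      by (auto simp: cis_one_def cis_inverse.simps[of F l])
  qed
qed

lemma cis_E_empty: "cis_E {#} = 1"
  by (simp add: cis_E_def zee_def)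

lemma cis_E_negX_eq_inverse: "cis_E_negX = cis_inverse cis_E"
  unfolding cis_E_negX_def
  using cis_mul_inverse[of cis_E, OF cis_E_empty] cis_inverse_unique[of cis_E, OF cis_E_empty]
  by (rule the_equality)

lemma cis_tilde_E_negX: "cis_tilde cis_E_negX = 1 - fps_X"
proof -
  have "cis_tilde cis_E * cis_tilde cis_E_negX = 1"
    by (simp only: cis_E_negX_eq_inverse cis_mul_inverse[of cis_E, OF cis_E_empty] cis_tilde_one
        flip: cis_tilde_mul)
  then have "inverse (1 - fps_X) * cis_tilde cis_E_negX = 1"
    by (simp only: cis_tilde_E)
  then have "inverse (inverse (1 - fps_X)) = cis_tilde cis_E_negX"
    by (rule fps_inverse_unique)
  then show ?thesis by simp
qed

section \<open>Composition\<close>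

lemma partitions_scale_bij:
  assumes "k > 0"
  shows "bij_betw (image_mset ((*) k)) (partitions m) {l \<in> partitions (k * m). \<forall>j\<in>#l. k dvd j}"
proof (rule bij_betw_byWitness[where f' = "image_mset (\<lambda>j. j div k)"])
  show "\<forall>l\<in>partitions m. image_mset (\<lambda>j. j div k) (image_mset ((*) k) l) = l"
    using assms by (simp add: multiset.map_comp o_def)
  show "\<forall>l\<in>{l \<in> partitions (k * m). \<forall>j\<in>#l. k dvd j}.
      image_mset ((*) k) (image_mset (\<lambda>j. j div k) l) = l"
    by (simp add: multiset.map_comp o_def cong: image_mset_cong)
  have "sum_mset (image_mset ((*) k) l) = k * sum_mset l" for l
    by (induction l) (simp_all add: algebra_simps)
  then show "image_mset ((*) k) ` partitions m \<subseteq> {l \<in> partitions (k * m). \<forall>j\<in>#l. k dvd j}"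
    using assms by (auto simp: partitions_def)
  have "image_mset (\<lambda>j. j div k) l \<in> partitions m"
    if "l \<in> partitions (k * m)" "\<forall>j\<in>#l. k dvd j" for l
  proof -
    have "k * sum_mset (image_mset (\<lambda>j. j div k) l) = sum_mset l"
      using that(2) by (simp add: sum_mset_distrib_left cong: image_mset_cong)
    then show ?thesis
      using that assms by (auto simp: partitions_def elim!: dvdE)
  qed
  then show "image_mset (\<lambda>j. j div k) ` {l \<in> partitions (k * m). \<forall>j\<in>#l. k dvd j} \<subseteq> partitions m"
    by blast
qed

lemma dvd_sum_mset: "\<forall>j\<in>#l. k dvd j \<Longrightarrow> (k::nat) dvd sum_mset l"
  by (induction l) auto

lemma cis_tilde_stretch_nth:
  assumes "k > 0"
  shows "fps_nth (cis_tilde (cis_stretch k G)) n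
       = (if k dvd n then fps_nth (cis_tilde G) (n div k) else 0)"
proof -
  let ?S = "{l \<in> partitions n. \<forall>j\<in>#l. k dvd j}"
  have "fps_nth (cis_tilde (cis_stretch k G)) n = (\<Sum>l\<in>?S. G (image_mset (\<lambda>j. j div k) l))"
    unfolding cis_tilde_nth cis_stretch_def by (simp add: sum.inter_filter finite_partitions)
  also have "\<dots> = (if k dvd n then fps_nth (cis_tilde G) (n div k) else 0)"
  proof (cases "k dvd n")
    case True
    then obtain m where n: "n = k * m" ..
    have "(\<Sum>l\<in>?S. G (image_mset (\<lambda>j. j div k) l))
        = (\<Sum>l\<in>partitions m. G (image_mset (\<lambda>j. j div k) (image_mset ((*) k) l)))"
      unfolding n by (rule sum.reindex_bij_betw[OF partitions_scale_bij[OF assms], symmetric])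
    also have "\<dots> = fps_nth (cis_tilde G) m"
      using assms by (simp add: cis_tilde_nth multiset.map_comp o_def)
    finally show ?thesis using True assms by (simp add: n)
  next
    case False
    then have "?S = {}" using dvd_sum_mset by (auto simp: partitions_def)
    then show ?thesis using False by (simp only: sum.empty) simp
  qed
  finally show ?thesis .
qed

lemma cis_tilde_stretch_monomial:
  assumes "k > 0" "cis_tilde G = fps_const \<sigma> * fps_X ^ c"
  shows "cis_tilde (cis_stretch k G) = fps_const \<sigma> * fps_X ^ (k * c)"
proof (rule fps_ext)
  fix n
  have "k dvd n \<and> n div k = c \<longleftrightarrow> n = k * c" using assms(1) by auto
  then show "fps_nth (cis_tilde (cis_stretch k G)) n = fps_nth (fps_const \<sigma> * fps_X ^ (k * c)) n"
    by (auto simp: cis_tilde_stretch_nth[OF assms(1)] assms(2))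
qed

lemma cis_tilde_comp_nth:
  "fps_nth (cis_tilde (cis_comp F G)) n = (\<Sum>m\<in>bounded_msets n.
     F m * fps_nth (prod_list (map (\<lambda>k. cis_tilde (cis_stretch k G)) (sorted_list_of_multiset m))) n)"
proof -
  let ?P = "\<lambda>m. cis_prod_list (map (\<lambda>k. cis_stretch k G) (sorted_list_of_multiset m))"
  have "fps_nth (cis_tilde (cis_comp F G)) n = (\<Sum>l\<in>partitions n. \<Sum>m\<in>bounded_msets n. F m * ?P m l)"
    unfolding cis_tilde_nth cis_comp_def bounded_msets_def
    by (intro sum.cong refl) (simp add: partitions_def)
  also have "\<dots> = (\<Sum>m\<in>bounded_msets n. F m * fps_nth (cis_tilde (?P m)) n)"
    by (subst sum.swap) (simp add: cis_tilde_nth sum_distrib_left)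
  finally show ?thesis
    by (simp add: cis_tilde_prod_list o_def)
qed

lemma prod_list_fps_monomials:
  "prod_list (map (\<lambda>k. fps_const \<sigma> * fps_X ^ (k * c)) ks)
     = fps_const (\<sigma> ^ length ks) * (fps_X :: 'a::comm_ring_1 fps) ^ (c * sum_list ks)"
  by (induction ks) (simp_all add: algebra_simps power_add flip: fps_const_mult)

lemma cis_tilde_comp_E_monomial_nth:
  assumes G: "cis_tilde G = fps_const \<sigma> * fps_X ^ c" and "c > 0"
  shows "fps_nth (cis_tilde (cis_comp cis_E G)) n = (if c dvd n then zee_sum \<sigma> (n div c) else 0)"
proof -
  let ?P = "\<lambda>m. 0 \<notin># m \<and> n = c * sum_mset m"
  have "fps_nth (cis_tilde (cis_comp cis_E G)) n
      = (\<Sum>m\<in>bounded_msets n. if ?P m then \<sigma> ^ size m / zee m else 0)"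
    unfolding cis_tilde_comp_nth
  proof (intro sum.cong refl)
    fix m assume "m \<in> bounded_msets n"
    then have "map (\<lambda>k. cis_tilde (cis_stretch k G)) (sorted_list_of_multiset m)
        = map (\<lambda>k. fps_const \<sigma> * fps_X ^ (k * c)) (sorted_list_of_multiset m)"
      using cis_tilde_stretch_monomial[OF _ G] by (intro map_cong) (auto simp: bounded_msets_def)
    then have "prod_list (map (\<lambda>k. cis_tilde (cis_stretch k G)) (sorted_list_of_multiset m))
        = fps_const (\<sigma> ^ length (sorted_list_of_multiset m))
          * fps_X ^ (c * sum_list (sorted_list_of_multiset m))"
      by (simp only: prod_list_fps_monomials)
    also have "\<dots> = fps_const (\<sigma> ^ size m) * fps_X ^ (c * sum_mset m)"
      by (metis mset_sorted_list_of_multiset size_mset sum_mset_sum_list)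
    finally have "prod_list (map (\<lambda>k. cis_tilde (cis_stretch k G)) (sorted_list_of_multiset m))
        = fps_const (\<sigma> ^ size m) * fps_X ^ (c * sum_mset m)" .
    then show "cis_E m * fps_nth (prod_list (map (\<lambda>k. cis_tilde (cis_stretch k G))
                 (sorted_list_of_multiset m))) n
        = (if ?P m then \<sigma> ^ size m / zee m else 0)"
      by (simp add: cis_E_def)
  qed
  also have "\<dots> = (\<Sum>m\<in>{m \<in> bounded_msets n. ?P m}. \<sigma> ^ size m / zee m)"
    by (simp add: sum.inter_filter finite_bounded_msets)
  also have "{m \<in> bounded_msets n. ?P m} = (if c dvd n then partitions (n div c) else {})"
    using partitions_subset_bounded_msets[of "n div c"] bounded_msets_mono[of "n div c" n] \<open>c > 0\<close>
    by (auto simp: partitions_def)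
  finally show ?thesis by (simp add: zee_sum_def)
qed

lemma cis_tilde_comp_E_neg_power:
  assumes "cis_tilde G = - (fps_X ^ c)" and "c > 0"
  shows "cis_tilde (cis_comp cis_E G) = 1 - fps_X ^ c"
proof (rule fps_ext)
  fix n
  have "cis_tilde G = fps_const (-1) * fps_X ^ c"
    using assms(1) by (metis fps_const_neg fps_const_1_eq_1 mult_minus1)
  then show "fps_nth (cis_tilde (cis_comp cis_E G)) n = fps_nth (1 - fps_X ^ c) n"
    using \<open>c > 0\<close> by (auto simp: cis_tilde_comp_E_monomial_nth zee_sum_minus_one elim!: dvdE)
qed

section \<open>The series of \<open>Q\<^bsup>s,t\<^esup>(X,X,X)\<close>\<close>

lemma fps_indicator_below:
  "Abs_fps (\<lambda>n. of_bool (n < k)) = (1 - fps_X ^ k) * inverse (1 - (fps_X :: 'a::field fps))"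
  by (rule fps_ext) (simp add: fps_inverse_one_minus_fps_X left_diff_distrib fps_X_power_mult_nth)

lemma cis_tilde_Q_XXX_inner:
  "cis_tilde (cis_mul cis_X (cis_diff (cis_mul (cis_comp (cis_E_less (1 + t)) cis_X) cis_E_negX) cis_one))
     = - (fps_X ^ (t + 2))"
proof -
  have "(1 - fps_X) * inverse (1 - fps_X) = (1 :: rat fps)"
    by (rule inverse_mult_eq_1') simp
  then have indicator: "Abs_fps (\<lambda>n. of_bool (n < 1 + t)) * (1 - fps_X) = 1 - (fps_X :: rat fps) ^ (1 + t)"
    by (simp add: fps_indicator_below mult.assoc mult.commute[of "inverse (1 - fps_X)"])
  have "cis_tilde (cis_mul cis_X (cis_diff (cis_mul (cis_comp (cis_E_less (1 + t)) cis_X) cis_E_negX) cis_one))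
      = fps_X * (Abs_fps (\<lambda>n. of_bool (n < 1 + t)) * (1 - fps_X) - 1)"
    by (simp only: cis_tilde_mul cis_tilde_diff cis_tilde_comp_X cis_tilde_X cis_tilde_E_negX
        cis_tilde_one cis_E_less_def cis_tilde_E_range zero_le simp_thms)
  also have "\<dots> = fps_X * (1 - fps_X ^ (1 + t) - 1)"
    by (simp only: indicator)
  also have "\<dots> = - (fps_X ^ (t + 2))"
    by (simp add: algebra_simps)
  finally show ?thesis .
qed

lemma cis_tilde_Q_XXX:
  "cis_tilde (Q_XXX s t) = (1 - fps_X ^ (s + 2)) * (1 - fps_X ^ (t + 2)) * inverse (1 - fps_X) - 1"
proof -
  have E: "cis_tilde (cis_comp cis_E (cis_mul cis_X
      (cis_diff (cis_mul (cis_comp (cis_E_less (1 + t)) cis_X) cis_E_negX) cis_one)))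
     = 1 - fps_X ^ (t + 2)"
    by (rule cis_tilde_comp_E_neg_power[OF cis_tilde_Q_XXX_inner]) simp
  have A: "cis_tilde (cis_add (cis_add cis_one cis_X) (cis_comp (cis_E_range 2 (2 + s)) cis_X))
     = Abs_fps (\<lambda>n. of_bool (n < s + 2))"
    by (rule fps_ext) (auto simp: cis_tilde_add cis_tilde_one cis_tilde_X cis_tilde_comp_X
        cis_tilde_E_range fps_one_nth)
  show ?thesis
    unfolding Q_XXX_def cis_tilde_diff cis_tilde_mul E A fps_indicator_below cis_tilde_one
    by (simp add: algebra_simps)
qed

lemma cis_tilde_quadratic_correction:
  "cis_tilde (cis_diff (cis_diff (cis_mul cis_X cis_X)
       (cis_smul (of_bool (t > 0)) (cis_mul cis_X cis_X)))
       (cis_smul (of_bool (s > 0)) (cis_comp (cis_E_n 2) cis_X)))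
   = fps_X ^ 2 - of_bool (t > 0) * fps_X ^ 2 - of_bool (s > 0) * fps_X ^ 2"
proof -
  have "cis_tilde (cis_comp (cis_E_n 2) cis_X) = fps_X ^ 2"
    by (rule fps_ext) (simp add: cis_tilde_comp_X cis_E_n_def cis_tilde_E_range)
  moreover have "fps_const (of_bool b) = (of_bool b :: rat fps)" for b
    by (cases b) simp_all
  ultimately show ?thesis
    by (simp add: cis_tilde_diff cis_tilde_smul cis_tilde_mul cis_tilde_X power2_eq_square)
qed

theorem lemma4p5:
  fixes s t :: nat
  shows "(cis_tilde (Q_XXX s t) =
           (1 - fps_X ^ (s + 2)) * (1 - fps_X ^ (t + 2)) * inverse (1 - fps_X) - 1) \<and>
         (cis_tilde (cis_diff (cis_diff (cis_mul cis_X cis_X)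
                       (cis_smul (of_bool (t > 0)) (cis_mul cis_X cis_X)))
                       (cis_smul (of_bool (s > 0)) (cis_comp (cis_E_n 2) cis_X)))
           = fps_X ^ 2 - of_bool (t > 0) * fps_X ^ 2 - of_bool (s > 0) * fps_X ^ 2) \<and>
         (cis_tilde (Q_XXX s t) = cis_tilde (Q_XXX t s)) \<and>
         (cis_tilde (cis_diff (cis_diff (cis_mul cis_X cis_X)
                       (cis_smul (of_bool (t > 0)) (cis_mul cis_X cis_X)))
                       (cis_smul (of_bool (s > 0)) (cis_comp (cis_E_n 2) cis_X)))
         = cis_tilde (cis_diff (cis_diff (cis_mul cis_X cis_X)
                       (cis_smul (of_bool (s > 0)) (cis_mul cis_X cis_X)))
                       (cis_smul (of_bool (t > 0)) (cis_comp (cis_E_n 2) cis_X))))"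
  using cis_tilde_Q_XXX[of s t] cis_tilde_Q_XXX[of t s]
    cis_tilde_quadratic_correction[of t s] cis_tilde_quadratic_correction[of s t]
  by (simp add: mult_ac)

end
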